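(* Let $\nu$ be an ergodic $S$-invariant probability measure on $X_\eta$ different from the Dirac measure at the all-zero sequence. Then for each $k\ge1$ there exists $b'_k$ with $1<b'_k$ and $b'_k\mid b_k$ such that all $b'_k$-th roots of unity are eigenvalues of $(S,X_\eta,\nu)$. In particular the system $(S,X_\eta,\nu)$ has infinite rational discrete spectrum.
   Context: Let $S$ be the shift on $\{0,1\}^{\mathbb Z}$, $(Sx)(n)=x(n+1)$. Let $\mathscr{B}=\{b_1,b_2,\dots\}\subset\{2,3,\dots\}$ with $\gcd(b_i,b_j)=1$ for $i\ne j$ and $\sum_i1/b_i<\infty$. Define $\eta(n)=1$ iff $b_i\nmid n$ for all $i$ (else $0$), and let $X_\eta$ be the set of $y\in\{0,1\}^{\mathbb Z}$ all of whose finite blocks occur in $\eta$; equivalently $y\in X_\eta$ iff $|\mathrm{supp}(y)\bmod b_i|<b_i$ for all $i$, with $\mathrm{supp}(y)=\{n:y(n)=1\}$. An eigenvalue of $(S,X_\eta,\nu)$ is $\lambda\in\mathbb C$ such that $f\circ S=\lambda f$ for some nonzero $f\in L^2(\nu)$. *)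

theory Defs
  imports "HOL-Probability.Probability"
begin

text \<open>Points of the full shift: functions int \<Rightarrow> bool (True = symbol 1).\<close>

definition shift :: "(int \<Rightarrow> bool) \<Rightarrow> (int \<Rightarrow> bool)" where
  "shift x = (\<lambda>n. x (n + 1))"

definition full_shift_space :: "(int \<Rightarrow> bool) measure" where
  "full_shift_space = Pi\<^sub>M UNIV (\<lambda>_. count_space UNIV)"

definition eta :: "(nat \<Rightarrow> nat) \<Rightarrow> int \<Rightarrow> bool" where
  "eta b n = (\<forall>i. \<not> int (b i) dvd n)"

definition Xeta :: "(nat \<Rightarrow> nat) \<Rightarrow> (int \<Rightarrow> bool) set" where
  "Xeta b = {y. \<forall>m (l::nat). \<exists>t. \<forall>j<l. y (m + int j) = eta b (t + int j)}"

definition shift_invariant :: "(int \<Rightarrow> bool) measure \<Rightarrow> bool" where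
  "shift_invariant \<nu> \<longleftrightarrow> shift \<in> \<nu> \<rightarrow>\<^sub>M \<nu> \<and> distr \<nu> \<nu> shift = \<nu>"

definition shift_ergodic :: "(int \<Rightarrow> bool) measure \<Rightarrow> bool" where
  "shift_ergodic \<nu> \<longleftrightarrow> (\<forall>A \<in> sets \<nu>. shift -` A \<inter> space \<nu> = A \<longrightarrow>
      measure \<nu> A = 0 \<or> measure \<nu> A = 1)"

definition is_eigenvalue :: "(int \<Rightarrow> bool) measure \<Rightarrow> complex \<Rightarrow> bool" where
  "is_eigenvalue \<nu> c \<longleftrightarrow> (\<exists>f :: (int \<Rightarrow> bool) \<Rightarrow> complex.
      f \<in> borel_measurable \<nu> \<and> integrable \<nu> (\<lambda>x. (norm (f x))\<^sup>2) \<and>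
      \<not> (AE x in \<nu>. f x = 0) \<and> (AE x in \<nu>. f (shift x) = c * f x))"

end

theory Submission
  imports Defs
begin

(*
  Fix k and B = b k. A point y of X_eta misses at least one residue class modulo B in its
  support, and the shift rotates the set of missed residues by one step. The rotation orbit
  of this set is therefore shift invariant, so by ergodicity almost every y has its missed set
  in one orbit, of some period p dividing B. The position of y within the orbit, read
  modulo p, increases by one under the shift; hence z raised to that position is an
  eigenfunction for every p-th root of unity z. Period 1 would mean the missed set is
  (almost surely) empty, impossible in X_eta, or everything, which forces nu to be the Dirac
  measure at the zero sequence. Coprimality of the b_k makes the periods found for
  different k distinct, giving infinitely many roots of unity as eigenvalues.
*)

definition rotate_residues :: "int \<Rightarrow> int \<Rightarrow> int set \<Rightarrow> int set" where
  "rotate_residues B i X = {r \<in> {0..<B}. (r + i) mod B \<in> X}"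

lemma rotate_residues_0: "X \<subseteq> {0..<B} \<Longrightarrow> rotate_residues B 0 X = X"
  by (auto simp: rotate_residues_def)

lemma rotate_residues_mod: "rotate_residues B (i mod B) X = rotate_residues B i X"
  by (simp add: rotate_residues_def mod_add_right_eq)

lemma rotate_residues_add:
  "B > 0 \<Longrightarrow> rotate_residues B i (rotate_residues B j X) = rotate_residues B (i + j) X"
  by (auto simp: rotate_residues_def mod_add_left_eq add.assoc)

lemma rotate_residues_eq_iff:
  assumes "B > 0" "X \<subseteq> {0..<B}"
  shows "rotate_residues B i X = rotate_residues B j X \<longleftrightarrow> rotate_residues B (i - j) X = X"
proof
  assume "rotate_residues B i X = rotate_residues B j X"
  then have "rotate_residues B (- j) (rotate_residues B i X) =
            rotate_residues B (- j) (rotate_residues B j X)"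
    by simp
  then show "rotate_residues B (i - j) X = X"
    using assms by (simp add: rotate_residues_add rotate_residues_0)
next
  assume "rotate_residues B (i - j) X = X"
  then show "rotate_residues B i X = rotate_residues B j X"
    using rotate_residues_add[OF assms(1), of j "i - j" X] by simp
qed

lemma rotate_residues_multiple:
  assumes "B > 0" "X \<subseteq> {0..<B}" and fix_q: "rotate_residues B q X = X"
  shows "rotate_residues B (q * c) X = X"
proof (induction c rule: int_induct[where k = 0])
  case base
  show ?case using assms(2) by (simp add: rotate_residues_0)
next
  case (step1 c)
  have "rotate_residues B (q * (c + 1)) X = rotate_residues B (q * c) (rotate_residues B q X)"
    using assms(1) by (simp add: rotate_residues_add algebra_simps)
  then show ?case using step1 fix_q by simp
next
  case (step2 c)
  have "rotate_residues B (q * (c - 1)) X = rotate_residues B (q * c - q) X"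
    by (simp add: algebra_simps)
  also have "\<dots> = X"
    using rotate_residues_eq_iff[OF assms(1,2), of "q * c" q] step2 fix_q by simp
  finally show ?case .
qed

definition rotation_period :: "int \<Rightarrow> int set \<Rightarrow> nat" where
  "rotation_period B X = (LEAST p. p > 0 \<and> rotate_residues B (int p) X = X)"

lemma rotation_period_is_least:
  assumes "B > 0" "X \<subseteq> {0..<B}"
  shows "rotation_period B X > 0" and "rotate_residues B (int (rotation_period B X)) X = X"
    and "\<And>q. q > 0 \<Longrightarrow> rotate_residues B (int q) X = X \<Longrightarrow> rotation_period B X \<le> q"
proof -
  have "nat B > 0 \<and> rotate_residues B (int (nat B)) X = X"
    using assms rotate_residues_mod[of B B X] by (simp add: rotate_residues_0)
  then have "rotation_period B X > 0 \<and> rotate_residues B (int (rotation_period B X)) X = X"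
    unfolding rotation_period_def by (rule LeastI)
  then show "rotation_period B X > 0" "rotate_residues B (int (rotation_period B X)) X = X"
    by auto
  show "\<And>q. q > 0 \<Longrightarrow> rotate_residues B (int q) X = X \<Longrightarrow> rotation_period B X \<le> q"
    unfolding rotation_period_def by (rule Least_le) simp
qed

lemma rotate_residues_eq_self_iff:
  assumes "B > 0" "X \<subseteq> {0..<B}"
  shows "rotate_residues B i X = X \<longleftrightarrow> int (rotation_period B X) dvd i"
proof
  let ?p = "rotation_period B X"
  assume fix_i: "rotate_residues B i X = X"
  define r where "r = i mod int ?p"
  have r: "0 \<le> r" "r < int ?p"
    using rotation_period_is_least(1)[OF assms] by (simp_all add: r_def)
  have r_eq: "r = i - int ?p * (i div int ?p)"
    by (simp add: r_def minus_mult_div_eq_mod)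
  have "rotate_residues B r X = X"
    using rotate_residues_eq_iff[OF assms] fix_i
      rotate_residues_multiple[OF assms rotation_period_is_least(2)[OF assms]] r_eq by metis
  then have "r = 0"
    using rotation_period_is_least(3)[OF assms, of "nat r"] r(1,2) by (cases "r = 0") auto
  then show "int ?p dvd i" by (simp add: r_def dvd_eq_mod_eq_0)
next
  assume "int (rotation_period B X) dvd i"
  then show "rotate_residues B i X = X"
    using rotate_residues_multiple[OF assms rotation_period_is_least(2)[OF assms]] by auto
qed

lemma rotation_period_dvd: "B > 0 \<Longrightarrow> X \<subseteq> {0..<B} \<Longrightarrow> int (rotation_period B X) dvd B"
  using rotate_residues_eq_self_iff[of B X B] rotate_residues_mod[of B B X]
  by (simp add: rotate_residues_0)

lemma rotation_period_eq_1:
  assumes "B > 0" "X \<subseteq> {0..<B}" "rotation_period B X = 1"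
  shows "X = {} \<or> X = {0..<B}"
proof (cases "X = {}")
  case False
  then obtain r where r: "r \<in> X" by auto
  have "s \<in> X" if "s \<in> {0..<B}" for s
  proof -
    have "s \<in> rotate_residues B (r - s) X" using r assms(2) that by (auto simp: rotate_residues_def)
    then show ?thesis using rotate_residues_eq_self_iff[OF assms(1,2)] assms(3) by simp
  qed
  then show ?thesis using assms(2) by auto
qed simp

definition rotation_index :: "int \<Rightarrow> int set \<Rightarrow> int set \<Rightarrow> nat" where
  "rotation_index B X S = (LEAST n. S = rotate_residues B (int n) X)"

lemma rotate_residues_rotation_index:
  assumes "B > 0" "S = rotate_residues B i X"
  shows "rotate_residues B (int (rotation_index B X S)) X = S"
proof -
  have "S = rotate_residues B (int (nat (i mod B))) X"
    using assms rotate_residues_mod[of B i X] by simp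
  then show ?thesis
    unfolding rotation_index_def
    by (rule LeastI[where P = "\<lambda>n. S = rotate_residues B (int n) X", symmetric])
qed

lemma rotation_index_rotate_1:
  assumes "B > 0" "X \<subseteq> {0..<B}" "S = rotate_residues B i X"
  shows "int (rotation_period B X) dvd
           int (rotation_index B X (rotate_residues B 1 S)) - int (rotation_index B X S) - 1"
proof -
  let ?j = "int (rotation_index B X S)"
    and ?j' = "int (rotation_index B X (rotate_residues B 1 S))"
  have "rotate_residues B ?j' X = rotate_residues B 1 (rotate_residues B ?j X)"
    using rotate_residues_rotation_index[OF assms(1)] rotate_residues_add[OF assms(1)] assms(3)
    by metis
  also have "\<dots> = rotate_residues B (?j + 1) X"
    using rotate_residues_add[OF assms(1)] by (simp add: add.commute)
  finally show ?thesis
    using rotate_residues_eq_iff[OF assms(1,2)] rotate_residues_eq_self_iff[OF assms(1,2)]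
    by (simp add: algebra_simps)
qed

definition missed_residues :: "int \<Rightarrow> (int \<Rightarrow> bool) \<Rightarrow> int set" where
  "missed_residues B y = {r \<in> {0..<B}. \<forall>n. y n \<longrightarrow> n mod B \<noteq> r}"

lemma missed_residues_subset: "missed_residues B y \<subseteq> {0..<B}"
  by (auto simp: missed_residues_def)

lemma missed_residues_shift:
  assumes "B > 0"
  shows "missed_residues B (shift y) = rotate_residues B 1 (missed_residues B y)"
proof -
  have "(\<forall>n. y (n + 1) \<longrightarrow> n mod B \<noteq> r) \<longleftrightarrow> (\<forall>n. y n \<longrightarrow> n mod B \<noteq> (r + 1) mod B)"
    if "r \<in> {0..<B}" for r
  proof -
    have "n mod B = r \<longleftrightarrow> (n + 1) mod B = (r + 1) mod B" for n
    proof -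
      have "n mod B = r \<longleftrightarrow> n mod B = r mod B" using that by simp
      also have "\<dots> \<longleftrightarrow> (n + 1) mod B = (r + 1) mod B" by (simp add: mod_eq_dvd_iff)
      finally show ?thesis .
    qed
    then have "(\<forall>n. y (n + 1) \<longrightarrow> n mod B \<noteq> r) \<longleftrightarrow>
               (\<forall>n. y (n + 1) \<longrightarrow> (n + 1) mod B \<noteq> (r + 1) mod B)"
      by simp
    also have "\<dots> \<longleftrightarrow> (\<forall>n. y n \<longrightarrow> n mod B \<noteq> (r + 1) mod B)"
      by (metis diff_add_cancel)
    finally show ?thesis .
  qed
  then show ?thesis
    using assms by (auto simp: missed_residues_def rotate_residues_def shift_def)
qed

lemma missed_residues_eq_all:
  assumes "B > 0" "missed_residues B y = {0..<B}"
  shows "y = (\<lambda>_. False)"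
proof
  fix n
  have "n mod B \<in> missed_residues B y" using assms by simp
  then show "y n = False" by (auto simp: missed_residues_def)
qed

lemma Xeta_translate_finite:
  assumes "y \<in> Xeta b" "finite N"
  shows "\<exists>t. \<forall>n\<in>N. y n = eta b (n + t)"
proof (cases "N = {}")
  case False
  define m where "m = Min N"
  obtain t where t: "\<And>j. j < nat (Max N - m) + 1 \<Longrightarrow> y (m + int j) = eta b (t + int j)"
    using assms(1) unfolding Xeta_def by blast
  have "y n = eta b (n + (t - m))" if "n \<in> N" for n
  proof -
    have "m \<le> n" "n \<le> Max N" using assms(2) that by (auto simp: m_def)
    then show ?thesis using t[of "nat (n - m)"] by (simp add: algebra_simps)
  qed
  then show ?thesis by blast
qed simp

lemma missed_residues_Xeta_nonempty:
  assumes "y \<in> Xeta b" "b k > 0"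
  shows "missed_residues (int (b k)) y \<noteq> {}"
proof
  let ?B = "int (b k)"
  assume "missed_residues ?B y = {}"
  then have "\<forall>r\<in>{0..<?B}. \<exists>n. y n \<and> n mod ?B = r" unfolding missed_residues_def by blast
  then obtain hit where hit: "\<And>r. r \<in> {0..<?B} \<Longrightarrow> y (hit r) \<and> hit r mod ?B = r" by metis
  obtain t where t: "\<And>n. n \<in> hit ` {0..<?B} \<Longrightarrow> y n = eta b (n + t)"
    using Xeta_translate_finite[OF assms(1), of "hit ` {0..<?B}"] by auto
  define r where "r = (- t) mod ?B"
  have r: "r \<in> {0..<?B}" using assms(2) by (simp add: r_def)
  have "(hit r + t) mod ?B = (hit r mod ?B + t) mod ?B" by (simp add: mod_add_left_eq)
  also have "\<dots> = ((- t) mod ?B + t) mod ?B" using hit[OF r] by (simp add: r_def)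
  also have "\<dots> = 0" by (simp add: mod_add_left_eq)
  finally have "?B dvd hit r + t" by (simp add: dvd_eq_mod_eq_0)
  then show False using hit[OF r] t[of "hit r"] r by (auto simp: eta_def)
qed

lemma measurable_missed_residues:
  assumes "sets \<nu> = sets full_shift_space"
  shows "missed_residues B \<in> \<nu> \<rightarrow>\<^sub>M count_space (Pow {0..<B})"
proof -
  have [measurable]: "(\<lambda>y. y n) \<in> \<nu> \<rightarrow>\<^sub>M count_space UNIV" for n
    by (subst measurable_cong_sets[OF assms refl]) (simp add: full_shift_space_def)
  have "{y \<in> space \<nu>. missed_residues B y = X} \<in> sets \<nu>" if "X \<subseteq> {0..<B}" for X
  proof -
    have "{y \<in> space \<nu>. missed_residues B y = X} =
          {y \<in> space \<nu>. \<forall>r\<in>{0..<B}. r \<in> X \<longleftrightarrow> (\<forall>n. y n \<longrightarrow> n mod B \<noteq> r)}"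
      using that by (auto simp: missed_residues_def)
    also have "\<dots> \<in> sets \<nu>" by measurable
    finally show ?thesis .
  qed
  moreover have "missed_residues B -` {X} \<inter> space \<nu> = {y \<in> space \<nu>. missed_residues B y = X}" for X
    by auto
  ultimately show ?thesis
    using missed_residues_subset by (auto simp: measurable_count_space_eq2)
qed

lemma shift_ergodic_invariant_AE_const:
  assumes "prob_space \<nu>" "shift_ergodic \<nu>" "space \<nu> = UNIV"
    and \<phi>_meas: "\<phi> \<in> \<nu> \<rightarrow>\<^sub>M count_space T" and "finite T"
    and \<phi>_inv: "\<And>y. \<phi> (shift y) = \<phi> y"
  shows "\<exists>y\<^sub>0. AE y in \<nu>. \<phi> y = \<phi> y\<^sub>0"
proof -
  interpret prob_space \<nu> by fact
  let ?L = "\<lambda>t. {y \<in> space \<nu>. \<phi> y = t}"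
  have L_sets: "?L t \<in> sets \<nu>" for t
    using \<phi>_meas by (rule measurable_sets_Collect) auto
  have \<phi>_T: "\<phi> y \<in> T" for y
    using measurable_space[OF \<phi>_meas] assms(3) by simp
  have "1 = \<P>(y in \<nu>. True)" by (simp add: prob_space)
  also have "\<dots> = (\<Sum>t\<in>T. prob (?L t))"
    using \<phi>_T by (intro prob_sum) (auto simp: L_sets \<open>finite T\<close>)
  finally have "\<exists>t\<in>T. prob (?L t) \<noteq> 0"
    by (rule contrapos_pp) simp
  then obtain t where "prob (?L t) \<noteq> 0" by blast
  moreover have "shift -` ?L t \<inter> space \<nu> = ?L t"
    using \<phi>_inv assms(3) by auto
  ultimately have L_1: "prob (?L t) = 1"
    using assms(2) L_sets unfolding shift_ergodic_def by blast
  then have "AE y in \<nu>. \<phi> y = t"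
    using prob_eq_1[OF L_sets] by simp
  moreover have "?L t \<noteq> {}"
  proof
    assume "?L t = {}"
    with L_1 show False by simp
  qed
  ultimately show ?thesis by blast
qed

lemma root_of_unity_power_cong:
  fixes z :: complex
  assumes "z ^ p = 1" "int p dvd int a - int c"
  shows "z ^ a = z ^ c"
proof -
  have "int a mod int p = int c mod int p"
    using assms(2) by (simp add: mod_eq_dvd_iff)
  then have "a mod p = c mod p"
    by (metis of_nat_eq_iff zmod_int)
  moreover have "z ^ n = z ^ (n mod p)" for n
  proof -
    have "z ^ n = z ^ (p * (n div p) + n mod p)" by simp
    also have "\<dots> = z ^ (n mod p)" by (simp only: power_add power_mult assms(1)) simp
    finally show ?thesis .
  qed
  ultimately show ?thesis by metis
qed

lemma is_eigenvalue_of_cyclic_index: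
  fixes h :: "(int \<Rightarrow> bool) \<Rightarrow> nat" and z :: complex
  assumes "prob_space \<nu>" and h_meas: "h \<in> \<nu> \<rightarrow>\<^sub>M count_space UNIV"
    and h_shift: "AE y in \<nu>. int p dvd int (h (shift y)) - int (h y) - 1"
    and "p > 0" "z ^ p = 1"
  shows "is_eigenvalue \<nu> z"
proof -
  interpret prob_space \<nu> by fact
  define f where "f y = z ^ h y" for y
  have norm_f: "norm (f y) = 1" for y
    using power_eq_1_iff[OF \<open>z ^ p = 1\<close>] \<open>p > 0\<close> by (simp add: f_def norm_power)
  have "f \<in> borel_measurable \<nu>"
    unfolding f_def by (rule measurable_compose[OF h_meas borel_measurable_count_space])
  moreover have "integrable \<nu> (\<lambda>y. (norm (f y))\<^sup>2)"
    by (simp add: norm_f)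
  moreover have "f y \<noteq> 0" for y
    using norm_f[of y] by auto
  then have "\<not> (AE y in \<nu>. f y = 0)" by simp
  moreover have "AE y in \<nu>. f (shift y) = z * f y"
    using h_shift
  proof eventually_elim
    case (elim y)
    then have "int p dvd int (h (shift y)) - int (Suc (h y))"
      by (simp add: diff_diff_eq add.commute)
    then have "z ^ h (shift y) = z ^ Suc (h y)"
      by (rule root_of_unity_power_cong[OF \<open>z ^ p = 1\<close>])
    then show ?case by (simp add: f_def)
  qed
  ultimately show ?thesis
    unfolding is_eigenvalue_def by blast
qed

lemma prob_space_eq_return_if_AE_eq:
  assumes "prob_space \<nu>" "sets \<nu> = sets M" "AE x in \<nu>. x = c"
  shows "\<nu> = return M c"
proof (rule measure_eqI)
  interpret prob_space \<nu> by fact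
  show "sets \<nu> = sets (return M c)" using assms(2) by simp
  fix A assume A: "A \<in> sets \<nu>"
  have "emeasure \<nu> A = emeasure \<nu> (if c \<in> A then space \<nu> else {})"
    using assms(3) A by (intro emeasure_eq_AE) auto
  then show "emeasure \<nu> A = emeasure (return M c) A"
    using A assms(2) by (simp add: emeasure_space_1)
qed

lemma space_eq_UNIV_if_sets_full_shift_space:
  "sets \<nu> = sets full_shift_space \<Longrightarrow> space \<nu> = UNIV"
  by (drule sets_eq_imp_space_eq) (auto simp: full_shift_space_def space_PiM)

lemma AE_missed_residues_in_rotation_orbit:
  assumes "prob_space \<nu>" "sets \<nu> = sets full_shift_space" "shift_ergodic \<nu>" "B > 0"
  shows "\<exists>X \<subseteq> {0..<B}. AE y in \<nu>. \<exists>i. missed_residues B y = rotate_residues B i X"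
proof -
  define orbit where "orbit S = range (\<lambda>i. rotate_residues B i S)" for S
  have "orbit (missed_residues B (shift y)) = orbit (missed_residues B y)" for y
  proof -
    have "orbit (missed_residues B (shift y)) =
          range (\<lambda>i. rotate_residues B (i + 1) (missed_residues B y))"
      using \<open>B > 0\<close> by (simp add: orbit_def missed_residues_shift rotate_residues_add)
    also have "\<dots> = orbit (missed_residues B y)"
      unfolding orbit_def by (auto simp: image_iff) (metis diff_add_cancel)
    finally show ?thesis .
  qed
  moreover have "(\<lambda>y. orbit (missed_residues B y)) \<in> \<nu> \<rightarrow>\<^sub>M count_space (orbit ` Pow {0..<B})"
    using measurable_missed_residues[OF assms(2)] by (rule measurable_compose) simp
  ultimately obtain y\<^sub>0
    where "AE y in \<nu>. orbit (missed_residues B y) = orbit (missed_residues B y\<^sub>0)"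
    using shift_ergodic_invariant_AE_const[OF assms(1,3)]
      space_eq_UNIV_if_sets_full_shift_space[OF assms(2)]
    by blast
  then have "AE y in \<nu>. \<exists>i. missed_residues B y = rotate_residues B i (missed_residues B y\<^sub>0)"
  proof eventually_elim
    case (elim y)
    have "missed_residues B y \<in> orbit (missed_residues B y)"
      unfolding orbit_def using rotate_residues_0[OF missed_residues_subset] by (metis rangeI)
    then show ?case using elim by (auto simp: orbit_def)
  qed
  then show ?thesis using missed_residues_subset by blast
qed

lemma rotation_period_missed_residues_neq_1:
  assumes prob: "prob_space \<nu>" and sets_\<nu>: "sets \<nu> = sets full_shift_space"
    and AE_Xeta: "AE y in \<nu>. y \<in> Xeta b"
    and not_dirac: "\<nu> \<noteq> return full_shift_space (\<lambda>_. False)" and "b k > 0"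
    and X: "X \<subseteq> {0..<int (b k)}"
    and AE_orbit: "AE y in \<nu>. \<exists>i. missed_residues (int (b k)) y = rotate_residues (int (b k)) i X"
  shows "rotation_period (int (b k)) X \<noteq> 1"
proof
  interpret prob_space \<nu> by fact
  let ?B = "int (b k)"
  have B: "?B > 0" using \<open>b k > 0\<close> by simp
  assume period_1: "rotation_period ?B X = 1"
  then have AE_X: "AE y in \<nu>. missed_residues ?B y = X"
    using AE_orbit rotate_residues_eq_self_iff[OF B X] by simp
  consider "X = {}" | "X = {0..<?B}"
    using rotation_period_eq_1[OF B X period_1] by blast
  then show False
  proof cases
    case 1
    have "AE y in \<nu>. False"
      using AE_X AE_Xeta by eventually_elim
        (use 1 missed_residues_Xeta_nonempty \<open>b k > 0\<close> in auto)
    then show False by simp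
  next
    case 2
    have "AE y in \<nu>. y = (\<lambda>_. False)"
      using AE_X by eventually_elim (use 2 missed_residues_eq_all[OF B] in auto)
    then show False
      using not_dirac prob_space_eq_return_if_AE_eq[OF prob sets_\<nu>] by blast
  qed
qed

lemma roots_of_unity_eigenvalues_dvd:
  assumes prob: "prob_space \<nu>" and sets_\<nu>: "sets \<nu> = sets full_shift_space"
    and AE_Xeta: "AE y in \<nu>. y \<in> Xeta b" and erg: "shift_ergodic \<nu>"
    and not_dirac: "\<nu> \<noteq> return full_shift_space (\<lambda>_. False)" and "b k > 0"
  shows "\<exists>p. 1 < p \<and> p dvd b k \<and> (\<forall>z::complex. z ^ p = 1 \<longrightarrow> is_eigenvalue \<nu> z)"
proof -
  let ?B = "int (b k)"
  have B: "?B > 0" using \<open>b k > 0\<close> by simp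
  obtain X where X: "X \<subseteq> {0..<?B}"
    and AE_orbit: "AE y in \<nu>. \<exists>i. missed_residues ?B y = rotate_residues ?B i X"
    using AE_missed_residues_in_rotation_orbit[OF prob sets_\<nu> erg B] by blast
  define p where "p = rotation_period ?B X"
  have "p > 1"
    using rotation_period_missed_residues_neq_1[OF prob sets_\<nu> AE_Xeta not_dirac \<open>b k > 0\<close> X AE_orbit]
      rotation_period_is_least(1)[OF B X]
    by (simp add: p_def)
  moreover have "p dvd b k"
    using rotation_period_dvd[OF B X] by (simp add: p_def)
  moreover have "is_eigenvalue \<nu> z" if "z ^ p = 1" for z :: complex
  proof (rule is_eigenvalue_of_cyclic_index[OF prob _ _ _ that])
    show "(\<lambda>y. rotation_index ?B X (missed_residues ?B y)) \<in> \<nu> \<rightarrow>\<^sub>M count_space UNIV"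
      using measurable_missed_residues[OF sets_\<nu>] by (rule measurable_compose) simp
    show "AE y in \<nu>. int p dvd int (rotation_index ?B X (missed_residues ?B (shift y)))
                             - int (rotation_index ?B X (missed_residues ?B y)) - 1"
      using AE_orbit by eventually_elim
        (auto simp: p_def missed_residues_shift[OF B] intro: rotation_index_rotate_1[OF B X])
    show "p > 0" using \<open>p > 1\<close> by simp
  qed
  ultimately show ?thesis by blast
qed

lemma infinite_if_contains_roots_of_unity:
  fixes S :: "complex set" and p :: "nat \<Rightarrow> nat"
  assumes "inj p" "\<And>k. p k > 0" "\<And>k z. z ^ p k = 1 \<Longrightarrow> z \<in> S"
  shows "infinite S"
proof
  assume "finite S"
  have "p k \<le> card S" for k
  proof -
    have "card {z::complex. z ^ p k = 1} \<le> card S"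
      using assms(3) by (intro card_mono[OF \<open>finite S\<close>]) blast
    then show ?thesis using card_roots_unity_eq[of "p k"] assms(2)[of k] by simp
  qed
  then have "finite (range p)"
    by (meson atMost_iff finite_atMost finite_subset image_subset_iff)
  then show False
    using finite_imageD[OF _ assms(1)] by simp
qed

theorem mainTheorem8:
  fixes b :: "nat \<Rightarrow> nat" and \<nu> :: "(int \<Rightarrow> bool) measure"
  assumes b_ge2: "\<And>i. b i \<ge> 2"
    and b_coprime: "\<And>i j. i \<noteq> j \<Longrightarrow> coprime (b i) (b j)"
    and b_summable: "summable (\<lambda>i. 1 / real (b i))"
    and prob: "prob_space \<nu>"
    and sets_nu: "sets \<nu> = sets full_shift_space"
    and on_X: "emeasure \<nu> (Xeta b) = 1"
    and inv: "shift_invariant \<nu>"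
    and erg: "shift_ergodic \<nu>"
    and not_dirac: "\<nu> \<noteq> return full_shift_space (\<lambda>n. False)"
  shows "(\<forall>k. \<exists>b'. 1 < b' \<and> b' dvd b k \<and>
            (\<forall>z::complex. z ^ b' = 1 \<longrightarrow> is_eigenvalue \<nu> z))
         \<and> infinite {z::complex. is_eigenvalue \<nu> z \<and> (\<exists>n>0. z ^ n = 1)}"
proof -
  have "measure \<nu> (Xeta b) = 1"
    using on_X by (simp add: measure_def)
  then have "AE y in \<nu>. y \<in> Xeta b"
    by (rule prob_space.AE_prob_1[OF prob])
  then have divisors:
    "\<exists>p. 1 < p \<and> p dvd b k \<and> (\<forall>z::complex. z ^ p = 1 \<longrightarrow> is_eigenvalue \<nu> z)" for k
    using roots_of_unity_eigenvalues_dvd[OF prob sets_nu _ erg not_dirac] b_ge2[of k] by simp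
  then obtain p where p: "\<And>k. 1 < p k" "\<And>k. p k dvd b k"
    "\<And>k z. (z::complex) ^ p k = 1 \<Longrightarrow> is_eigenvalue \<nu> z"
    by metis
  have "inj p"
  proof (rule injI, rule ccontr)
    fix i j assume "p i = p j" "i \<noteq> j"
    then have "p i dvd 1"
      using p(2)[of i] p(2)[of j] b_coprime[of i j] by (metis coprime_common_divisor)
    then show False using p(1)[of i] by simp
  qed
  moreover have "p k > 0" for k
    using p(1)[of k] by simp
  ultimately have "infinite {z::complex. is_eigenvalue \<nu> z \<and> (\<exists>n>0. z ^ n = 1)}"
    using p(3) by (intro infinite_if_contains_roots_of_unity[of p]) blast+
  with divisors show ?thesis by blast
qed

end
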